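(* In the LTR setting, assume $|y(x)|\le M$ and $|\widetilde y_S(x)|\le M$ for all $x\in X$ and all training sets $S$, and that the pseudo-targets are $\beta_{loc}$-score-stable. Let $S,S'$ be two training sets differing in exactly one point, $h=h_S$, $h'=h_{S'}$ the LTR minimizers, $\Delta h=h'-h$ and $A=1+\kappa\sqrt{C+C'}$. Then for every $x\in X$, $$\frac{C}{m}\big[(h'(x)-y(x))^2-(h(x)-y(x))^2\big]+\frac{C'}{u}\big[(h'(x)-\widetilde y_{S'}(x))^2-(h(x)-\widetilde y_S(x))^2\big]\le 2AM\Big(\kappa\|\Delta h\|_K\Big(\frac Cm+\frac{C'}u\Big)+\beta_{loc}\frac{C'}u\Big).$$
   Context: Transductive setting: fixed full sample $X=\{x_1,\dots,x_{m+u}\}$ with real labels $y(x)$; training set $S\subset X$ of size $m$ with labels revealed, test set $T=X\setminus S$ of size $u$. Two training sets $S,S'$ differ in exactly one point if $S'=(S\setminus\{x\})\cup\{x'\}$ with $x\in S$, $x'\in X\setminus S$. LTR setting: $K$ is a positive semidefinite kernel on $X$ with $K(x,x)\le\kappa^2$ for all $x\in X$, $H_K$ its reproducing kernel Hilbert space with norm $\|\cdot\|_K$. For each training set $S$ a pseudo-target function $\widetilde y_S\colon X\to\mathbb{R}$ is given. With constants $C,C'\ge0$, the LTR objective is $$F(f,S)=\|f\|_K^2+\frac{C}{m}\sum_{x\in S}(f(x)-y(x))^2+\frac{C'}{u}\sum_{x\in T}(f(x)-\widetilde y_S(x))^2,$$ and the LTR algorithm returns $h_S=\arg\min_{f\in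 H_K}F(f,S)$. The pseudo-targets are $\beta_{loc}$-score-stable if $|\widetilde y_S(x)-\widetilde y_{S'}(x)|\le\beta_{loc}$ for all $x\in X$ and all pairs $S,S'$ differing in exactly one point. *)

theory Defs
  imports Complex_Main
begin

text \<open>The full sample X is a finite set; functions are real-valued on X and
  (for uniqueness) extended by 0 outside X.\<close>

definition psd_kernel :: "'a set \<Rightarrow> ('a \<Rightarrow> 'a \<Rightarrow> real) \<Rightarrow> bool" where
  "psd_kernel X K \<longleftrightarrow> (\<forall>x\<in>X. \<forall>z\<in>X. K x z = K z x) \<and>
     (\<forall>c::'a \<Rightarrow> real. 0 \<le> (\<Sum>x\<in>X. \<Sum>z\<in>X. c x * c z * K x z))"

definition kexp :: "'a set \<Rightarrow> ('a \<Rightarrow> 'a \<Rightarrow> real) \<Rightarrow> ('a \<Rightarrow> real) \<Rightarrow> 'a \<Rightarrow> real" where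
  "kexp X K c = (\<lambda>x. if x \<in> X then (\<Sum>z\<in>X. c z * K z x) else 0)"

definition in_rkhs :: "'a set \<Rightarrow> ('a \<Rightarrow> 'a \<Rightarrow> real) \<Rightarrow> ('a \<Rightarrow> real) \<Rightarrow> bool" where
  "in_rkhs X K f \<longleftrightarrow> (\<exists>c. f = kexp X K c)"

definition rkhs_norm2 :: "'a set \<Rightarrow> ('a \<Rightarrow> 'a \<Rightarrow> real) \<Rightarrow> ('a \<Rightarrow> real) \<Rightarrow> real" where
  "rkhs_norm2 X K f = (THE v. \<exists>c. f = kexp X K c \<and> v = (\<Sum>x\<in>X. \<Sum>z\<in>X. c x * c z * K x z))"

definition rkhs_norm :: "'a set \<Rightarrow> ('a \<Rightarrow> 'a \<Rightarrow> real) \<Rightarrow> ('a \<Rightarrow> real) \<Rightarrow> real" where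
  "rkhs_norm X K f = sqrt (rkhs_norm2 X K f)"

text \<open>LTR objective F(f,S); m = |S|, u = |X - S|.\<close>
definition ltr_obj :: "'a set \<Rightarrow> ('a \<Rightarrow> 'a \<Rightarrow> real) \<Rightarrow> ('a \<Rightarrow> real) \<Rightarrow> ('a set \<Rightarrow> 'a \<Rightarrow> real)
    \<Rightarrow> real \<Rightarrow> real \<Rightarrow> 'a set \<Rightarrow> ('a \<Rightarrow> real) \<Rightarrow> real" where
  "ltr_obj X K y yt C C' S f =
     rkhs_norm2 X K f
     + C / real (card S) * (\<Sum>x\<in>S. (f x - y x)\<^sup>2)
     + C' / real (card (X - S)) * (\<Sum>x\<in>X - S. (f x - yt S x)\<^sup>2)"

definition ltr_minimizer :: "'a set \<Rightarrow> ('a \<Rightarrow> 'a \<Rightarrow> real) \<Rightarrow> ('a \<Rightarrow> real) \<Rightarrow> ('a set \<Rightarrow> 'a \<Rightarrow> real)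
    \<Rightarrow> real \<Rightarrow> real \<Rightarrow> 'a set \<Rightarrow> ('a \<Rightarrow> real) \<Rightarrow> bool" where
  "ltr_minimizer X K y yt C C' S h \<longleftrightarrow> in_rkhs X K h \<and>
     (\<forall>f. in_rkhs X K f \<longrightarrow> ltr_obj X K y yt C C' S h \<le> ltr_obj X K y yt C C' S f)"

definition training_set :: "'a set \<Rightarrow> nat \<Rightarrow> 'a set \<Rightarrow> bool" where
  "training_set X m S \<longleftrightarrow> S \<subseteq> X \<and> card S = m"

definition differ_one :: "'a set \<Rightarrow> 'a set \<Rightarrow> 'a set \<Rightarrow> bool" where
  "differ_one X S S' \<longleftrightarrow> (\<exists>x x'. x \<in> S \<and> x' \<in> X - S \<and> S' = insert x' (S - {x}))"

definition score_stable :: "'a set \<Rightarrow> nat \<Rightarrow> ('a set \<Rightarrow> 'a \<Rightarrow> real) \<Rightarrow> real \<Rightarrow> bool" where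
  "score_stable X m yt \<beta> \<longleftrightarrow> (\<forall>S S'. training_set X m S \<longrightarrow> differ_one X S S' \<longrightarrow>
      (\<forall>x\<in>X. \<bar>yt S x - yt S' x\<bar> \<le> \<beta>))"

end

theory Submission imports Defs begin

(* The argument has three ingredients.
   (1) Reproducing-kernel estimate: for f in H_K and x in X, |f x| <= kappa * ||f||_K.
       Writing f = sum_z c z K(z,.), f x is the kernel bilinear form of c against the
       indicator of x; Cauchy-Schwarz for the positive semidefinite form (obtained from
       the discriminant of t |-> ||c + t e_x||^2) gives f(x)^2 <= ||f||^2 K(x,x).
   (2) A priori bound on minimizers: comparing h_S with the zero function in the
       objective gives ||h_S||^2 <= (C + C') M^2, hence |h_S x| <= kappa sqrt(C+C') M.
   (3) An elementary estimate for differences of squares: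
       (a' - c')^2 - (a - c)^2 = ((a'-a) - (c'-c)) (a' + a - c' - c).
   The theorem follows by applying (3) to the labelled and the pseudo-labelled term,
   bounding the first factor with (1) and score stability and the second with (2). *)

section \<open>Kernel quadratic forms and the RKHS norm\<close>

definition kbil :: "'a set \<Rightarrow> ('a \<Rightarrow> 'a \<Rightarrow> real) \<Rightarrow> ('a \<Rightarrow> real) \<Rightarrow> ('a \<Rightarrow> real) \<Rightarrow> real" where
  "kbil X K c d = (\<Sum>x\<in>X. \<Sum>z\<in>X. c x * d z * K x z)"

definition kquad :: "'a set \<Rightarrow> ('a \<Rightarrow> 'a \<Rightarrow> real) \<Rightarrow> ('a \<Rightarrow> real) \<Rightarrow> real" where
  "kquad X K c = kbil X K c c"

lemma kbil_sym:
  assumes "psd_kernel X K"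
  shows "kbil X K c d = kbil X K d c"
proof -
  have sym: "\<And>x z. x \<in> X \<Longrightarrow> z \<in> X \<Longrightarrow> K x z = K z x"
    using assms unfolding psd_kernel_def by blast
  have "kbil X K c d = (\<Sum>z\<in>X. \<Sum>x\<in>X. c x * d z * K x z)"
    unfolding kbil_def by (rule sum.swap)
  also have "\<dots> = kbil X K d c"
    unfolding kbil_def by (intro sum.cong refl) (simp add: sym mult_ac)
  finally show ?thesis .
qed

lemma kbil_kexp: "kbil X K c d = (\<Sum>x\<in>X. d x * kexp X K c x)"
proof -
  have "kbil X K c d = (\<Sum>z\<in>X. \<Sum>x\<in>X. c x * d z * K x z)"
    unfolding kbil_def by (rule sum.swap)
  also have "\<dots> = (\<Sum>x\<in>X. d x * kexp X K c x)"
    unfolding kexp_def by (simp add: sum_distrib_left mult_ac)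
  finally show ?thesis .
qed

lemma kquad_nonneg: "psd_kernel X K \<Longrightarrow> 0 \<le> kquad X K c"
  unfolding psd_kernel_def kquad_def kbil_def by blast

text \<open>The quadratic form only depends on the function c represents, so the squared
  RKHS norm (defined via a choice of coefficients) is well defined.\<close>
lemma kquad_kexp_eq:
  assumes psd: "psd_kernel X K" and eq: "kexp X K c1 = kexp X K c2"
  shows "kquad X K c1 = kquad X K c2"
proof -
  have "kquad X K c1 = kbil X K c2 c1"
    unfolding kquad_def kbil_kexp eq ..
  also have "\<dots> = kbil X K c1 c2" by (rule kbil_sym[OF psd])
  also have "\<dots> = kquad X K c2"
    unfolding kquad_def kbil_kexp eq ..
  finally show ?thesis .
qed

lemma rkhs_norm2_kexp:
  assumes psd: "psd_kernel X K"
  shows "rkhs_norm2 X K (kexp X K c) = kquad X K c"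
  unfolding rkhs_norm2_def
proof (rule the_equality)
  show "\<exists>c'. kexp X K c = kexp X K c' \<and> kquad X K c = (\<Sum>x\<in>X. \<Sum>z\<in>X. c' x * c' z * K x z)"
    by (auto simp: kquad_def kbil_def)
next
  fix v assume "\<exists>c'. kexp X K c = kexp X K c' \<and> v = (\<Sum>x\<in>X. \<Sum>z\<in>X. c' x * c' z * K x z)"
  then obtain c' where "kexp X K c = kexp X K c'" "v = kquad X K c'"
    by (auto simp: kquad_def kbil_def)
  then show "v = kquad X K c" using kquad_kexp_eq[OF psd] by metis
qed

lemma rkhs_norm2_zero: "psd_kernel X K \<Longrightarrow> rkhs_norm2 X K (\<lambda>_. 0) = 0"
proof -
  assume psd: "psd_kernel X K"
  have "kexp X K (\<lambda>_. 0) = (\<lambda>_. 0)" unfolding kexp_def by auto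
  then show ?thesis
    using rkhs_norm2_kexp[OF psd, of "\<lambda>_. 0"] by (simp add: kquad_def kbil_def)
qed

lemma in_rkhs_zero: "in_rkhs X K (\<lambda>_. 0)"
  unfolding in_rkhs_def kexp_def by (rule exI[of _ "\<lambda>_. 0"]) auto

lemma in_rkhs_diff:
  assumes "in_rkhs X K f" "in_rkhs X K g"
  shows "in_rkhs X K (\<lambda>z. f z - g z)"
proof -
  obtain c1 c2 where "f = kexp X K c1" "g = kexp X K c2"
    using assms unfolding in_rkhs_def by blast
  then have "(\<lambda>z. f z - g z) = kexp X K (\<lambda>z. c1 z - c2 z)"
    unfolding kexp_def by (auto simp: sum_subtractf left_diff_distrib)
  then show ?thesis unfolding in_rkhs_def by blast
qed

section \<open>The reproducing-kernel evaluation bound\<close>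

lemma nonneg_quadratic_discriminant:
  fixes a b c :: real
  assumes nonneg: "\<forall>t. 0 \<le> a + 2 * t * b + t\<^sup>2 * c" and c: "0 \<le> c"
  shows "b\<^sup>2 \<le> a * c"
proof (cases "c = 0")
  case True
  show ?thesis
  proof (rule ccontr)
    assume "\<not> ?thesis"
    then have "b \<noteq> 0" using True by simp
    define t where "t = -(\<bar>a\<bar> + 1) / (2 * b)"
    have "2 * t * b = -(\<bar>a\<bar> + 1)" unfolding t_def using \<open>b \<noteq> 0\<close> by (simp add: field_simps)
    moreover have "0 \<le> a + 2 * t * b + t\<^sup>2 * c" using nonneg by blast
    ultimately show False using True by (simp add: abs_if split: if_splits)
  qed
next
  case False
  then have c_pos: "c > 0" using c by simp
  have "0 \<le> a + 2 * (-b/c) * b + (-b/c)\<^sup>2 * c" using nonneg by blast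
  also have "\<dots> = a - b\<^sup>2 / c" using c_pos by (simp add: field_simps power2_eq_square)
  finally show ?thesis using c_pos by (simp add: field_simps)
qed

text \<open>Cauchy-Schwarz for the kernel form, tested against the indicator of a point:
  (f x)^2 <= ||f||^2 K(x,x).\<close>
lemma kexp_eval_sq_le:
  assumes psd: "psd_kernel X K" and fin: "finite X" and x: "x \<in> X"
  shows "(kexp X K c x)\<^sup>2 \<le> kquad X K c * K x x"
proof -
  define e where "e = (\<lambda>z. if z = x then 1 else (0::real))"
  have pick: "(\<Sum>z\<in>X. e z * g z) = g x" for g :: "'a \<Rightarrow> real"
  proof -
    have "(\<Sum>z\<in>X. e z * g z) = (\<Sum>z\<in>X. if z = x then g z else 0)"
      unfolding e_def by (intro sum.cong) auto
    then show ?thesis using fin x by simp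
  qed
  have bil: "kbil X K c e = kexp X K c x"
    by (simp add: kbil_kexp pick)
  have quad: "kquad X K e = K x x"
    using x by (simp add: kquad_def kbil_kexp pick kexp_def)
  have expand: "kquad X K (\<lambda>z. c z + t * e z)
      = kquad X K c + 2 * t * kbil X K c e + t\<^sup>2 * kquad X K e" for t
  proof -
    have "kquad X K (\<lambda>z. c z + t * e z)
        = kquad X K c + t * kbil X K c e + t * kbil X K e c + t\<^sup>2 * kquad X K e"
      by (simp add: kquad_def kbil_def algebra_simps sum.distrib sum_distrib_left power2_eq_square)
    then show ?thesis using kbil_sym[OF psd, of e c] by simp
  qed
  have "\<forall>t. 0 \<le> kquad X K c + 2 * t * kbil X K c e + t\<^sup>2 * kquad X K e"
    using kquad_nonneg[OF psd] expand by metis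
  from nonneg_quadratic_discriminant[OF this kquad_nonneg[OF psd]]
  show ?thesis unfolding bil quad .
qed

lemma rkhs_eval_bound:
  assumes psd: "psd_kernel X K" and fin: "finite X" and f: "in_rkhs X K f" and x: "x \<in> X"
    and kappa: "0 \<le> \<kappa>" "\<forall>z\<in>X. K z z \<le> \<kappa>\<^sup>2"
  shows "\<bar>f x\<bar> \<le> \<kappa> * rkhs_norm X K f"
proof -
  obtain c where f_eq: "f = kexp X K c" using f unfolding in_rkhs_def by blast
  have norm: "rkhs_norm X K f = sqrt (kquad X K c)"
    unfolding rkhs_norm_def f_eq rkhs_norm2_kexp[OF psd] ..
  have "(f x)\<^sup>2 \<le> kquad X K c * K x x"
    unfolding f_eq by (rule kexp_eval_sq_le[OF psd fin x])
  also have "\<dots> \<le> kquad X K c * \<kappa>\<^sup>2"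
    using kappa x kquad_nonneg[OF psd] by (simp add: mult_left_mono)
  finally have "sqrt ((f x)\<^sup>2) \<le> sqrt (kquad X K c * \<kappa>\<^sup>2)" by (rule real_sqrt_le_mono)
  then show ?thesis using norm kappa by (simp add: real_sqrt_mult mult.commute)
qed

section \<open>A priori bound on LTR minimizers\<close>

text \<open>A normalised sum of squares of values bounded by M is at most M^2 (times the
  weight); the degenerate case of an empty or infinite index set gives 0.\<close>
lemma weighted_mean_sq_le:
  fixes g :: "'a \<Rightarrow> real"
  assumes C: "0 \<le> C" and bound: "\<forall>z\<in>A. \<bar>g z\<bar> \<le> M"
  shows "C / real (card A) * (\<Sum>z\<in>A. (g z)\<^sup>2) \<le> C * M\<^sup>2"
proof (cases "card A = 0")
  case True
  then show ?thesis using C by simp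
next
  case False
  have "(\<Sum>z\<in>A. (g z)\<^sup>2) \<le> (\<Sum>z\<in>A. M\<^sup>2)"
    using bound by (intro sum_mono) (metis abs_ge_zero power2_abs power_mono)
  then have "(\<Sum>z\<in>A. (g z)\<^sup>2) \<le> real (card A) * M\<^sup>2" by simp
  then have "C / real (card A) * (\<Sum>z\<in>A. (g z)\<^sup>2) \<le> C / real (card A) * (real (card A) * M\<^sup>2)"
    using C by (intro mult_left_mono) auto
  then show ?thesis using False by simp
qed

text \<open>Ingredient (2): comparing a minimizer with the zero function,
  ||h_S||^2 <= F(h_S,S) <= F(0,S) <= (C + C') M^2.\<close>
lemma ltr_minimizer_norm2_bound:
  assumes psd: "psd_kernel X K" and CC: "0 \<le> C" "0 \<le> C'"
    and y_bd: "\<forall>z\<in>S. \<bar>y z\<bar> \<le> M" and yt_bd: "\<forall>z\<in>X - S. \<bar>yt S z\<bar> \<le> M"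
    and h: "ltr_minimizer X K y yt C C' S h"
  shows "rkhs_norm2 X K h \<le> (C + C') * M\<^sup>2"
proof -
  have "0 \<le> C / real (card S) * (\<Sum>z\<in>S. (h z - y z)\<^sup>2)"
    and "0 \<le> C' / real (card (X - S)) * (\<Sum>z\<in>X - S. (h z - yt S z)\<^sup>2)"
    using CC by (intro mult_nonneg_nonneg sum_nonneg; simp)+
  then have "rkhs_norm2 X K h \<le> ltr_obj X K y yt C C' S h"
    unfolding ltr_obj_def by linarith
  also have "\<dots> \<le> ltr_obj X K y yt C C' S (\<lambda>_. 0)"
    using h in_rkhs_zero unfolding ltr_minimizer_def by blast
  also have "\<dots> \<le> C * M\<^sup>2 + C' * M\<^sup>2"
  proof -
    have "C / real (card S) * (\<Sum>z\<in>S. (0 - y z)\<^sup>2) \<le> C * M\<^sup>2"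
      using weighted_mean_sq_le[OF CC(1), of S "\<lambda>z. 0 - y z"] y_bd by simp
    moreover have "C' / real (card (X - S)) * (\<Sum>z\<in>X - S. (0 - yt S z)\<^sup>2) \<le> C' * M\<^sup>2"
      using weighted_mean_sq_le[OF CC(2), of "X - S" "\<lambda>z. 0 - yt S z"] yt_bd by simp
    ultimately show ?thesis
      unfolding ltr_obj_def rkhs_norm2_zero[OF psd] by linarith
  qed
  finally show ?thesis by (simp add: algebra_simps)
qed

lemma ltr_minimizer_eval_bound:
  assumes psd: "psd_kernel X K" and fin: "finite X" and x: "x \<in> X"
    and kappa: "0 \<le> \<kappa>" "\<forall>z\<in>X. K z z \<le> \<kappa>\<^sup>2"
    and CC: "0 \<le> C" "0 \<le> C'" and M: "0 \<le> M"
    and y_bd: "\<forall>z\<in>S. \<bar>y z\<bar> \<le> M" and yt_bd: "\<forall>z\<in>X - S. \<bar>yt S z\<bar> \<le> M"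
    and h: "ltr_minimizer X K y yt C C' S h"
  shows "\<bar>h x\<bar> \<le> \<kappa> * sqrt (C + C') * M"
proof -
  have h_rkhs: "in_rkhs X K h" using h unfolding ltr_minimizer_def by blast
  have "rkhs_norm X K h \<le> sqrt ((C + C') * M\<^sup>2)"
    unfolding rkhs_norm_def
    by (rule real_sqrt_le_mono[OF ltr_minimizer_norm2_bound[OF psd CC y_bd yt_bd h]])
  also have "\<dots> = sqrt (C + C') * M" using M by (simp add: real_sqrt_mult)
  finally have "\<kappa> * rkhs_norm X K h \<le> \<kappa> * (sqrt (C + C') * M)"
    using kappa by (intro mult_left_mono) auto
  then show ?thesis using rkhs_eval_bound[OF psd fin h_rkhs x kappa] by simp
qed

lemma differ_one_training_set:
  assumes fin: "finite X" and S: "training_set X m S" and diff: "differ_one X S S'"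
  shows "training_set X m S'"
proof -
  have SX: "S \<subseteq> X" and card_S: "card S = m" using S unfolding training_set_def by auto
  obtain a a' where a: "a \<in> S" and a': "a' \<in> X - S" and S'_eq: "S' = insert a' (S - {a})"
    using diff unfolding differ_one_def by blast
  have fin_S: "finite S" using SX fin finite_subset by blast
  have "card S' = Suc (card (S - {a}))" using S'_eq a' fin_S by simp
  also have "\<dots> = m"
  proof -
    have "0 < m" using a fin_S card_S card_gt_0_iff by blast
    then show ?thesis using a fin_S card_S by (simp add: card_Diff_singleton)
  qed
  finally show ?thesis using S'_eq SX a' unfolding training_set_def by auto
qed

lemma sq_residual_diff_le:
  fixes a a' c c' B M :: real
  assumes "\<bar>a\<bar> \<le> B" "\<bar>a'\<bar> \<le> B" "\<bar>c\<bar> \<le> M" "\<bar>c'\<bar> \<le> M" and delta: "\<bar>(a' - a) - (c' - c)\<bar> \<le> \<delta>"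
  shows "(a' - c')\<^sup>2 - (a - c)\<^sup>2 \<le> \<delta> * (2 * (B + M))"
proof -
  have "(a' - c')\<^sup>2 - (a - c)\<^sup>2 = ((a' - a) - (c' - c)) * (a' + a - c' - c)"
    by (simp add: power2_eq_square algebra_simps)
  also have "\<dots> \<le> \<bar>(a' - a) - (c' - c)\<bar> * \<bar>a' + a - c' - c\<bar>"
    by (metis abs_ge_self abs_mult)
  also have "\<dots> \<le> \<delta> * (2 * (B + M))"
    using assms by (intro mult_mono) auto
  finally show ?thesis .
qed

theorem lemma11:
  fixes X :: "'a set" and K :: "'a \<Rightarrow> 'a \<Rightarrow> real" and y :: "'a \<Rightarrow> real"
    and yt :: "'a set \<Rightarrow> 'a \<Rightarrow> real" and m :: nat
    and C C' \<kappa> M \<beta> :: real and S S' :: "'a set" and h h' :: "'a \<Rightarrow> real" and x :: 'a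
  assumes finX: "finite X"
    and m_pos: "0 < m" and u_pos: "m < card X"
    and psd: "psd_kernel X K"
    and kappa: "0 \<le> \<kappa>" "\<forall>z\<in>X. K z z \<le> \<kappa>\<^sup>2"
    and CC: "0 \<le> C" "0 \<le> C'"
    and y_bd: "\<forall>z\<in>X. \<bar>y z\<bar> \<le> M"
    and yt_bd: "\<forall>T. training_set X m T \<longrightarrow> (\<forall>z\<in>X. \<bar>yt T z\<bar> \<le> M)"
    and stable: "score_stable X m yt \<beta>"
    and S: "training_set X m S" and diff: "differ_one X S S'"
    and h: "ltr_minimizer X K y yt C C' S h"
    and h': "ltr_minimizer X K y yt C C' S' h'"
    and x: "x \<in> X"
  shows "C / real m * ((h' x - y x)\<^sup>2 - (h x - y x)\<^sup>2)
         + C' / real (card X - m) * ((h' x - yt S' x)\<^sup>2 - (h x - yt S x)\<^sup>2)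
       \<le> 2 * (1 + \<kappa> * sqrt (C + C')) * M *
         (\<kappa> * rkhs_norm X K (\<lambda>z. h' z - h z) * (C / real m + C' / real (card X - m))
          + \<beta> * (C' / real (card X - m)))"
proof -
  define B where "B = \<kappa> * sqrt (C + C') * M"
  define D where "D = \<kappa> * rkhs_norm X K (\<lambda>z. h' z - h z)"
  have S': "training_set X m S'" by (rule differ_one_training_set[OF finX S diff])
  have y_x: "\<bar>y x\<bar> \<le> M" using y_bd x by blast
  then have M: "0 \<le> M" by linarith
  have yt_S: "\<forall>z\<in>X. \<bar>yt S z\<bar> \<le> M" and yt_S': "\<forall>z\<in>X. \<bar>yt S' z\<bar> \<le> M"
    using yt_bd S S' by blast+
  have minimizer_bound: "\<bar>g x\<bar> \<le> B"
    if T: "training_set X m T" and g: "ltr_minimizer X K y yt C C' T g" for T g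
  proof -
    have "\<forall>z\<in>T. \<bar>y z\<bar> \<le> M" using T y_bd unfolding training_set_def by blast
    moreover have "\<forall>z\<in>X - T. \<bar>yt T z\<bar> \<le> M" using T yt_bd by blast
    ultimately show ?thesis
      unfolding B_def using ltr_minimizer_eval_bound[OF psd finX x kappa CC M _ _ g] by blast
  qed
  have h_x: "\<bar>h x\<bar> \<le> B" and h'_x: "\<bar>h' x\<bar> \<le> B"
    using minimizer_bound S S' h h' by blast+
  have "in_rkhs X K (\<lambda>z. h' z - h z)"
    using h h' in_rkhs_diff unfolding ltr_minimizer_def by blast
  from rkhs_eval_bound[OF psd finX this x kappa]
  have change: "\<bar>h' x - h x\<bar> \<le> D" unfolding D_def by simp
  have stab: "\<bar>yt S x - yt S' x\<bar> \<le> \<beta>"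
    using stable S diff x unfolding score_stable_def by blast
  have labelled: "(h' x - y x)\<^sup>2 - (h x - y x)\<^sup>2 \<le> D * (2 * (B + M))"
    by (rule sq_residual_diff_le[OF h_x h'_x y_x y_x]) (simp add: change)
  have pseudo: "(h' x - yt S' x)\<^sup>2 - (h x - yt S x)\<^sup>2 \<le> (D + \<beta>) * (2 * (B + M))"
  proof (rule sq_residual_diff_le[OF h_x h'_x])
    show "\<bar>yt S x\<bar> \<le> M" "\<bar>yt S' x\<bar> \<le> M" using yt_S yt_S' x by blast+
    show "\<bar>(h' x - h x) - (yt S' x - yt S x)\<bar> \<le> D + \<beta>" using change stab by linarith
  qed
  have "C / real m * ((h' x - y x)\<^sup>2 - (h x - y x)\<^sup>2)
        + C' / real (card X - m) * ((h' x - yt S' x)\<^sup>2 - (h x - yt S x)\<^sup>2)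
      \<le> C / real m * (D * (2 * (B + M))) + C' / real (card X - m) * ((D + \<beta>) * (2 * (B + M)))"
    using labelled pseudo CC by (intro add_mono mult_left_mono) auto
  also have "\<dots> = 2 * (1 + \<kappa> * sqrt (C + C')) * M
      * (D * (C / real m + C' / real (card X - m)) + \<beta> * (C' / real (card X - m)))"
    unfolding B_def by (simp add: algebra_simps)
  finally show ?thesis unfolding D_def by (simp add: mult.assoc)
qed

end
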